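(* Let $U$ be a finite set and $\{X_u\}_{u\in U}$ finite non-empty sets; write $X_V=\prod_{u\in V}X_u$ for $V\subset U$. For every $V\subset U$ let $S_V\subset X_V$. Then for every integer $k\le|U|$, $$\Big|\mathbb E_{x\in X_U}\prod_{\substack{V\subset U\\|V|\le k}}S_V(x_V)-\prod_{\substack{V\subset U\\|V|\le k}}\mathbb E_{x_V\in X_V}S_V(x_V)\Big|\le 2^{|U|}\max_{\substack{V\subset U\\|V|\le k}}\Big\|S_V-\mathbb E_{x_V\in X_V}S_V\Big\|_{\Box^V(X_V)} .$$
   Context: Sets are identified with their indicator functions; $\mathbb E_{x\in X}$ is the uniform average over a finite set $X$. For $x=(x_u)_{u\in U}\in X_U$ and $V\subset U$, $x_V=(x_u)_{u\in V}$; for $V=\emptyset$, $X_\emptyset$ is a one-point set. For a finite index set $V$ and $f:X_V\to\mathbb C$ the Gowers box norm is $$\|f\|_{\Box^V(X_V)}^{2^{|V|}}=\mathbb E_{x^0,x^1\in X_V}\prod_{\omega\in\{0,1\}^V}\mathcal C^{|\omega|}f(x^{\omega}),$$ with $x^{\omega}=(x^{\omega_v}_v)_{v\in V}$, $|\omega|=\sum_v\omega_v$, $\mathcal C$ complex conjugation; when $V=\emptyset$ (so $f$ is a constant) $\|f\|_{\Box^\emptyset}=|f|$. *)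

theory Defs
  imports Complex_Main "HOL-Library.FuncSet" "HOL-Library.Indicator_Function"
begin

definition avg :: "'b set \<Rightarrow> ('b \<Rightarrow> 'c::field) \<Rightarrow> 'c" where
  "avg A f = (\<Sum>x\<in>A. f x) / of_nat (card A)"

text \<open>Points of X_V are extensional functions in PiE V X. The mixed point x^omega.\<close>
definition cube_pt :: "'u set \<Rightarrow> ('u \<Rightarrow> bool) \<Rightarrow> ('u \<Rightarrow> 'a) \<Rightarrow> ('u \<Rightarrow> 'a) \<Rightarrow> ('u \<Rightarrow> 'a)" where
  "cube_pt V \<omega> x0 x1 = (\<lambda>v. if v \<in> V then (if \<omega> v then x1 v else x0 v) else undefined)"

definition conj_pow :: "nat \<Rightarrow> complex \<Rightarrow> complex" where
  "conj_pow n z = (if even n then z else cnj z)"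

definition box_avg :: "'u set \<Rightarrow> ('u \<Rightarrow> 'a set) \<Rightarrow> (('u \<Rightarrow> 'a) \<Rightarrow> complex) \<Rightarrow> complex" where
  "box_avg V X f = avg (PiE V X \<times> PiE V X)
     (\<lambda>(x0, x1). \<Prod>\<omega>\<in>PiE V (\<lambda>_. UNIV :: bool set).
        conj_pow (card {v\<in>V. \<omega> v}) (f (cube_pt V \<omega> x0 x1)))"

text \<open>Box norm. The box average is a nonnegative real for V nonempty; for V empty it is
  f itself, and the convention is the modulus |f|. Taking cmod covers both cases.\<close>
definition box_norm :: "'u set \<Rightarrow> ('u \<Rightarrow> 'a set) \<Rightarrow> (('u \<Rightarrow> 'a) \<Rightarrow> complex) \<Rightarrow> real" where
  "box_norm V X f = cmod (box_avg V X f) powr (1 / 2 ^ card V)"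

end

theory Submission
  imports Defs "HOL-Analysis.Convex" "HOL-Analysis.Finite_Product_Measure"
begin

text \<open>Pick a \<open>\<subseteq>\<close>-maximal \<open>W\<close> in the family and write \<open>S\<^sub>W = (S\<^sub>W - \<EE> S\<^sub>W) + \<EE> S\<^sub>W\<close>.
  Every other \<open>V\<close> misses some coordinate of \<open>W\<close>, so grouping the remaining factors by such a
  coordinate and applying the Gowers--Cauchy--Schwarz inequality on \<open>X\<^sub>W\<close> bounds the contribution
  of the balanced part by \<open>\<parallel>S\<^sub>W - \<EE> S\<^sub>W\<parallel>\<^sub>\<box>\<close>; the rest is handled by induction on the
  family. There are at most \<open>2\<^bsup>|U|\<^esup>\<close> sets \<open>V \<subseteq> U\<close>.\<close>

lemma avg_cong: "(\<And>x. x \<in> A \<Longrightarrow> f x = g x) \<Longrightarrow> avg A f = avg A g"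
  by (simp add: avg_def cong: sum.cong)

lemma avg_add: "avg A (\<lambda>x. f x + g x) = avg A f + avg A g"
  by (simp add: avg_def sum.distrib add_divide_distrib)

lemma avg_cmult: "avg A (\<lambda>x. c * f x) = c * avg A f"
  by (simp add: avg_def sum_distrib_left)

lemma avg_multc: "avg A (\<lambda>x. f x * c) = avg A f * c"
  by (simp add: avg_def sum_distrib_right)

lemma avg_const: "finite A \<Longrightarrow> A \<noteq> {} \<Longrightarrow> avg A (\<lambda>x. c) = (c :: 'c :: field_char_0)"
  by (simp add: avg_def)

lemma avg_nonneg: "(\<And>x. x \<in> A \<Longrightarrow> 0 \<le> f x) \<Longrightarrow> 0 \<le> avg A (f :: _ \<Rightarrow> real)"
  by (simp add: avg_def sum_nonneg)

lemma avg_mono: "(\<And>x. x \<in> A \<Longrightarrow> f x \<le> g x) \<Longrightarrow> avg A f \<le> avg A (g :: _ \<Rightarrow> real)"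
  by (simp add: avg_def sum_mono divide_right_mono)

lemma avg_le_one:
  assumes "finite A" "\<And>x. x \<in> A \<Longrightarrow> f x \<le> 1"
  shows "avg A (f :: _ \<Rightarrow> real) \<le> 1"
proof -
  have "avg A f \<le> avg A (\<lambda>_. 1)" using assms(2) by (rule avg_mono)
  also have "\<dots> \<le> 1" using assms(1) by (cases "A = {}") (auto simp: avg_def)
  finally show ?thesis .
qed

lemma abs_avg_le_one:
  assumes "finite A" "\<And>x. x \<in> A \<Longrightarrow> \<bar>f x\<bar> \<le> 1"
  shows "\<bar>avg A (f :: _ \<Rightarrow> real)\<bar> \<le> 1"
proof -
  have "\<bar>avg A f\<bar> \<le> avg A (\<lambda>x. \<bar>f x\<bar>)"
    by (simp add: avg_def abs_divide divide_right_mono sum_abs)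
  also have "\<dots> \<le> 1" using assms by (rule avg_le_one)
  finally show ?thesis .
qed

lemma avg_Times:
  assumes "finite A" "finite B"
  shows "avg (A \<times> B) (\<lambda>(a, b). f a b) = avg A (\<lambda>a. avg B (f a))"
  using assms
  by (simp add: avg_def sum.cartesian_product[symmetric] card_cartesian_product
      sum_divide_distrib[symmetric] divide_divide_eq_left mult.commute)

lemma avg_swap:
  assumes "finite A" "finite B"
  shows "avg A (\<lambda>a. avg B (f a)) = avg B (\<lambda>b. avg A (\<lambda>a. f a b))"
  using assms by (simp add: avg_def sum_divide_distrib[symmetric] sum.swap[of _ A B])

lemma avg_reindex: "bij_betw h A B \<Longrightarrow> avg B f = avg A (\<lambda>x. f (h x))"
  by (simp add: avg_def sum.reindex_bij_betw bij_betw_same_card)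

lemma avg_Times_mult:
  assumes "finite A" "finite B"
  shows "avg (A \<times> B) (\<lambda>(a, b). f a * g b) = avg A f * avg B g"
proof -
  have "avg (A \<times> B) (\<lambda>(a, b). f a * g b) = avg A (\<lambda>a. avg B (\<lambda>b. f a * g b))"
    using assms by (rule avg_Times)
  then show ?thesis by (simp add: avg_cmult avg_multc)
qed

lemma avg_mult_sq_le:
  fixes f g :: "_ \<Rightarrow> real"
  shows "(avg A (\<lambda>x. f x * g x))\<^sup>2 \<le> avg A (\<lambda>x. (f x)\<^sup>2) * avg A (\<lambda>x. (g x)\<^sup>2)"
  using divide_right_mono[OF Cauchy_Schwarz_ineq_sum[of f g A], of "(real (card A))\<^sup>2"]
  by (simp add: avg_def power_divide power2_eq_square)

lemma avg_sq_le:
  assumes "finite A"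
  shows "(avg A f)\<^sup>2 \<le> avg A (\<lambda>x. (f x)\<^sup>2 :: real)"
proof -
  have "(avg A f)\<^sup>2 \<le> avg A (\<lambda>x. (f x)\<^sup>2) * avg A (\<lambda>x. 1\<^sup>2)"
    using avg_mult_sq_le[of A f "\<lambda>_. 1"] by simp
  also have "\<dots> \<le> avg A (\<lambda>x. (f x)\<^sup>2)"
    using assms by (intro mult_left_le avg_le_one avg_nonneg) auto
  finally show ?thesis .
qed

lemma avg_power_two_pow_le:
  assumes "finite A"
  shows "(avg A f) ^ 2 ^ n \<le> avg A (\<lambda>x. f x ^ 2 ^ n :: real)"
proof (induction n arbitrary: f)
  case (Suc n)
  have "(avg A f) ^ 2 ^ Suc n = ((avg A f)\<^sup>2) ^ 2 ^ n"
    by (simp add: power_mult[symmetric] mult.commute)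
  also have "\<dots> \<le> (avg A (\<lambda>x. (f x)\<^sup>2)) ^ 2 ^ n"
    using avg_sq_le[OF assms] by (intro power_mono) auto
  also have "\<dots> \<le> avg A (\<lambda>x. ((f x)\<^sup>2) ^ 2 ^ n)" by (rule Suc)
  finally show ?case by (simp add: power_mult[symmetric] mult.commute)
qed simp

lemma avg_weighted_avg_sq_le:
  fixes G :: "'p \<Rightarrow> real"
  assumes "finite P" "finite A" "\<And>p. p \<in> P \<Longrightarrow> \<bar>G p\<bar> \<le> 1"
  shows "(avg P (\<lambda>p. G p * avg A (\<lambda>a. K a p)))\<^sup>2
    \<le> avg (A \<times> A) (\<lambda>(a, b). avg P (\<lambda>p. K a p * K b p))"
proof -
  have "(avg P (\<lambda>p. G p * avg A (\<lambda>a. K a p)))\<^sup>2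
      \<le> avg P (\<lambda>p. (G p)\<^sup>2) * avg P (\<lambda>p. (avg A (\<lambda>a. K a p))\<^sup>2)"
    by (rule avg_mult_sq_le)
  also have "\<dots> \<le> avg P (\<lambda>p. (avg A (\<lambda>a. K a p))\<^sup>2)"
    using assms by (intro mult_left_le_one_le avg_nonneg avg_le_one) (auto simp: abs_square_le_1)
  also have "\<dots> = avg P (\<lambda>p. avg (A \<times> A) (\<lambda>(a, b). K a p * K b p))"
    using assms(2) by (simp add: avg_Times_mult power2_eq_square)
  also have "\<dots> = avg (A \<times> A) (\<lambda>(a, b). avg P (\<lambda>p. K a p * K b p))"
    using assms(1,2) by (subst avg_swap) (auto simp: split_def)
  finally show ?thesis .
qed

lemma avg_PiE_insert:
  assumes "v \<notin> V" "finite (PiE V X)" "finite (X v)"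
  shows "avg (PiE (insert v V) X) f = avg (X v) (\<lambda>a. avg (PiE V X) (\<lambda>z. f (z(v := a))))"
proof -
  have "bij_betw (\<lambda>(a, z). z(v := a)) (X v \<times> PiE V X) (PiE (insert v V) X)"
    using assms(1) by (simp add: bij_betw_def inj_combinator PiE_insert_eq)
  then have "avg (PiE (insert v V) X) f = avg (X v \<times> PiE V X) (\<lambda>(a, z). f (z(v := a)))"
    by (subst avg_reindex) (auto simp: split_def)
  also have "\<dots> = avg (X v) (\<lambda>a. avg (PiE V X) (\<lambda>z. f (z(v := a))))"
    using assms(3,2) by (rule avg_Times)
  finally show ?thesis .
qed

lemma finite_PiE_insert: "finite (PiE V X) \<Longrightarrow> finite (X v) \<Longrightarrow> finite (PiE (insert v V) X)"
  by (simp add: PiE_insert_eq)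

lemma avg_PiE_insert_Times:
  assumes "v \<notin> V" "finite (PiE V X)" "finite (X v)" "finite Y"
  shows "avg (PiE (insert v V) X \<times> Y) (\<lambda>(x, y). f x y)
    = avg (PiE V X \<times> Y) (\<lambda>(z, y). avg (X v) (\<lambda>a. f (z(v := a)) y))"
proof -
  have "avg (PiE (insert v V) X \<times> Y) (\<lambda>(x, y). f x y)
      = avg (X v) (\<lambda>a. avg (PiE V X) (\<lambda>z. avg Y (f (z(v := a)))))"
    using assms by (simp add: avg_Times finite_PiE_insert avg_PiE_insert)
  also have "\<dots> = avg (PiE V X) (\<lambda>z. avg Y (\<lambda>y. avg (X v) (\<lambda>a. f (z(v := a)) y)))"
    using assms(2-4) by (simp add: avg_swap[of "X v"])
  also have "\<dots> = avg (PiE V X \<times> Y) (\<lambda>(z, y). avg (X v) (\<lambda>a. f (z(v := a)) y))"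
    using assms(2,4) by (simp add: avg_Times)
  finally show ?thesis .
qed

lemma avg_PiE_empty_Times:
  "finite Y \<Longrightarrow> Y \<noteq> {} \<Longrightarrow> avg (PiE {} X \<times> Y) (\<lambda>(x, y). f x) = (f (\<lambda>_. undefined) :: 'c :: field_char_0)"
  by (subst avg_Times) (simp_all add: avg_const avg_def)

definition real_box_avg :: "'u set \<Rightarrow> ('u \<Rightarrow> 'a set) \<Rightarrow> (('u \<Rightarrow> 'a) \<Rightarrow> real) \<Rightarrow> real" where
  "real_box_avg V X f = avg (PiE V X \<times> PiE V X)
     (\<lambda>(x0, x1). \<Prod>\<omega>\<in>PiE V (\<lambda>_. UNIV :: bool set). f (cube_pt V \<omega> x0 x1))"

lemma box_norm_of_real:
  "box_norm V X (\<lambda>y. complex_of_real (f y)) = \<bar>real_box_avg V X f\<bar> powr (1 / 2 ^ card V)"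
proof -
  have conj_pow_of_real: "conj_pow n (complex_of_real r) = complex_of_real r" for n r
    by (simp add: conj_pow_def complex_eq_iff)
  have avg_of_real: "avg A (\<lambda>x. complex_of_real (g x)) = complex_of_real (avg A g)" for A g
    by (simp add: avg_def)
  show ?thesis
    by (simp add: box_norm_def box_avg_def real_box_avg_def conj_pow_of_real avg_of_real split_def
        flip: of_real_prod)
qed

lemma real_box_avg_empty: "real_box_avg {} X f = f (\<lambda>_. undefined)"
  by (simp add: real_box_avg_def avg_def cube_pt_def)

lemma prod_PiE_bool_insert:
  assumes "v \<notin> V"
  shows "(\<Prod>\<omega>\<in>PiE (insert v V) (\<lambda>_. UNIV :: bool set). F \<omega>)
    = (\<Prod>\<omega>\<in>PiE V (\<lambda>_. UNIV :: bool set). F (\<omega>(v := False)) * F (\<omega>(v := True)))"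
proof -
  have "bij_betw (\<lambda>(t, \<omega>). \<omega>(v := t)) (UNIV \<times> PiE V (\<lambda>_. UNIV)) (PiE (insert v V) (\<lambda>_. UNIV :: bool set))"
    using inj_combinator[OF assms, of "\<lambda>_. UNIV"] by (simp add: bij_betw_def PiE_insert_eq)
  then have "(\<Prod>\<omega>\<in>PiE (insert v V) (\<lambda>_. UNIV :: bool set). F \<omega>)
      = (\<Prod>t\<in>UNIV. \<Prod>\<omega>\<in>PiE V (\<lambda>_. UNIV :: bool set). F (\<omega>(v := t)))"
    by (simp add: prod.reindex_bij_betw[symmetric] prod.cartesian_product split_def)
  then show ?thesis by (simp add: UNIV_bool prod.distrib)
qed

lemma cube_pt_fun_upd:
  "cube_pt (insert v V) (\<omega>(v := t)) (x0(v := a)) (x1(v := b)) = (cube_pt V \<omega> x0 x1)(v := (if t then b else a))"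
  by (auto simp: cube_pt_def)

lemma real_box_avg_insert:
  assumes "v \<notin> V" "finite (PiE V X)" "finite (X v)"
  shows "real_box_avg (insert v V) X f
    = avg (X v \<times> X v) (\<lambda>(a, b). real_box_avg V X (\<lambda>z. f (z(v := a)) * f (z(v := b))))"
proof -
  let ?P = "PiE V X"
  define C where "C x0 x1 = (\<Prod>\<omega>\<in>PiE (insert v V) (\<lambda>_. UNIV :: bool set). f (cube_pt (insert v V) \<omega> x0 x1))"
    for x0 x1
  have "real_box_avg (insert v V) X f = avg (PiE (insert v V) X) (\<lambda>x0. avg (PiE (insert v V) X) (\<lambda>x1. C x0 x1))"
    using assms by (simp add: real_box_avg_def C_def avg_Times finite_PiE_insert)
  also have "\<dots> = avg (X v) (\<lambda>a. avg ?P (\<lambda>y0. avg (X v) (\<lambda>b. avg ?P (\<lambda>y1. C (y0(v := a)) (y1(v := b))))))"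
    using assms by (simp add: avg_PiE_insert)
  also have "\<dots> = avg (X v) (\<lambda>a. avg (X v) (\<lambda>b. avg ?P (\<lambda>y0. avg ?P (\<lambda>y1. C (y0(v := a)) (y1(v := b))))))"
    using assms by (simp add: avg_swap[of ?P "X v"])
  also have "\<dots> = avg (X v) (\<lambda>a. avg (X v) (\<lambda>b. real_box_avg V X (\<lambda>z. f (z(v := a)) * f (z(v := b)))))"
    using assms by (simp add: avg_Times real_box_avg_def C_def prod_PiE_bool_insert cube_pt_fun_upd)
  also have "\<dots> = avg (X v \<times> X v) (\<lambda>(a, b). real_box_avg V X (\<lambda>z. f (z(v := a)) * f (z(v := b))))"
    using assms(3) by (simp add: avg_Times)
  finally show ?thesis .
qed

text \<open>A weight \<open>h\<close> that does not depend on the coordinate \<open>v\<close> is removed by Cauchy--Schwarz, at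
  the price of doubling that coordinate in the remaining factor.\<close>

lemma sq_avg_PiE_insert_le:
  fixes h F :: "('u \<Rightarrow> 'a) \<Rightarrow> 'b \<Rightarrow> real"
  assumes "v \<notin> V" "finite (PiE V X)" "finite (X v)" "X v \<noteq> {}" "finite Y"
    and "\<And>x y. x \<in> PiE (insert v V) X \<Longrightarrow> y \<in> Y \<Longrightarrow> \<bar>h x y\<bar> \<le> 1"
    and "\<And>x a y. x \<in> PiE (insert v V) X \<Longrightarrow> a \<in> X v \<Longrightarrow> y \<in> Y \<Longrightarrow> h (x(v := a)) y = h x y"
  shows "(avg (PiE (insert v V) X \<times> Y) (\<lambda>(x, y). h x y * F x y))\<^sup>2
    \<le> avg (X v \<times> X v) (\<lambda>(a, b). avg (PiE V X \<times> Y) (\<lambda>(z, y). F (z(v := a)) y * F (z(v := b)) y))"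
proof -
  obtain a0 where a0: "a0 \<in> X v" using assms(4) by blast
  have upd_in: "z(v := a) \<in> PiE (insert v V) X" if "z \<in> PiE V X" "a \<in> X v" for z a
    using that by (rule PiE_fun_upd[rotated])
  define G where "G = (\<lambda>(z, y). h (z(v := a0)) y)"
  define K where "K a = (\<lambda>(z, y). F (z(v := a)) y)" for a
  have "avg (PiE (insert v V) X \<times> Y) (\<lambda>(x, y). h x y * F x y)
      = avg (PiE V X \<times> Y) (\<lambda>(z, y). avg (X v) (\<lambda>a. h (z(v := a)) y * K a (z, y)))"
    unfolding K_def using assms(1-3,5) by (simp add: avg_PiE_insert_Times)
  also have "\<dots> = avg (PiE V X \<times> Y) (\<lambda>p. G p * avg (X v) (\<lambda>a. K a p))"
  proof (intro avg_cong, clarify)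
    fix z y assume zy: "z \<in> PiE V X" "y \<in> Y"
    have "h (z(v := a)) y = G (z, y)" if "a \<in> X v" for a
      using assms(7)[OF upd_in[OF zy(1) a0] that zy(2)]
      unfolding G_def by (simp only: fun_upd_upd prod.case)
    then show "avg (X v) (\<lambda>a. h (z(v := a)) y * K a (z, y)) = G (z, y) * avg (X v) (\<lambda>a. K a (z, y))"
      by (simp add: avg_cmult[symmetric] cong: avg_cong)
  qed
  finally have "(avg (PiE (insert v V) X \<times> Y) (\<lambda>(x, y). h x y * F x y))\<^sup>2 = \<dots>\<^sup>2"
    by (rule arg_cong)
  also have "\<dots> \<le> avg (X v \<times> X v) (\<lambda>(a, b). avg (PiE V X \<times> Y) (\<lambda>p. K a p * K b p))"
    using assms(2,3,5) by (intro avg_weighted_avg_sq_le) (auto simp: G_def intro!: assms(6) upd_in a0)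
  finally show ?thesis by (simp add: K_def split_def)
qed

text \<open>The variable \<open>y \<in> Y\<close> carries coordinates on which the factors \<open>g w\<close> may depend but which
  are never doubled.\<close>

lemma gowers_cauchy_schwarz:
  fixes X :: "'u \<Rightarrow> 'a set" and Y :: "'b set" and f :: "('u \<Rightarrow> 'a) \<Rightarrow> real"
    and g :: "'u \<Rightarrow> ('u \<Rightarrow> 'a) \<Rightarrow> 'b \<Rightarrow> real"
  assumes "finite V" "\<And>w. w \<in> V \<Longrightarrow> finite (X w) \<and> X w \<noteq> {}" "finite Y" "Y \<noteq> {}"
    and "\<And>w x y. w \<in> V \<Longrightarrow> x \<in> PiE V X \<Longrightarrow> y \<in> Y \<Longrightarrow> \<bar>g w x y\<bar> \<le> 1"
    and "\<And>w x a y. w \<in> V \<Longrightarrow> x \<in> PiE V X \<Longrightarrow> a \<in> X w \<Longrightarrow> y \<in> Y \<Longrightarrow> g w (x(w := a)) y = g w x y"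
  shows "avg (PiE V X \<times> Y) (\<lambda>(x, y). f x * (\<Prod>w\<in>V. g w x y)) ^ 2 ^ card V \<le> real_box_avg V X f"
  using assms(1,2,5,6)
proof (induction V arbitrary: f g rule: finite_induct)
  case empty
  then show ?case using avg_PiE_empty_Times[OF assms(3,4), of X f] by (simp add: real_box_avg_empty)
next
  case (insert v V)
  let ?P = "PiE V X"
  have fin: "finite ?P" "finite (X v)" using insert by (auto intro!: finite_PiE)
  have upd_in: "z(v := a) \<in> PiE (insert v V) X" if "z \<in> ?P" "a \<in> X v" for z a
    using that by (rule PiE_fun_upd[rotated])
  define F where "F a b = (\<lambda>z. f (z(v := a)) * f (z(v := b)))" for a b
  define T where "T a b = avg (?P \<times> Y) (\<lambda>(z, y). F a b z * (\<Prod>w\<in>V. g w (z(v := a)) y * g w (z(v := b)) y))"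
    for a b
  define E where "E = avg (PiE (insert v V) X \<times> Y) (\<lambda>(x, y). f x * (\<Prod>w\<in>insert v V. g w x y))"
  have "E = avg (PiE (insert v V) X \<times> Y) (\<lambda>(x, y). g v x y * (f x * (\<Prod>w\<in>V. g w x y)))"
    unfolding E_def using insert.hyps by (simp add: ac_simps)
  then have "E\<^sup>2 \<le> avg (X v \<times> X v) (\<lambda>(a, b). avg (?P \<times> Y) (\<lambda>(z, y).
      (f (z(v := a)) * (\<Prod>w\<in>V. g w (z(v := a)) y)) * (f (z(v := b)) * (\<Prod>w\<in>V. g w (z(v := b)) y))))"
    using insert.hyps(2) fin insert.prems assms(3) by (simp only:) (rule sq_avg_PiE_insert_le; blast)
  also have "\<dots> = avg (X v \<times> X v) (\<lambda>(a, b). T a b)"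
    by (auto intro!: avg_cong simp: T_def F_def prod.distrib ac_simps)
  finally have E_sq: "E\<^sup>2 \<le> avg (X v \<times> X v) (\<lambda>(a, b). T a b)" .
  have T_le: "T a b ^ 2 ^ card V \<le> real_box_avg V X (F a b)" if "a \<in> X v" "b \<in> X v" for a b
    unfolding T_def
  proof (rule insert.IH)
    show "\<And>w. w \<in> V \<Longrightarrow> finite (X w) \<and> X w \<noteq> {}" using insert.prems(1) by blast
    show "\<bar>g w (z(v := a)) y * g w (z(v := b)) y\<bar> \<le> 1" if "w \<in> V" "z \<in> ?P" "y \<in> Y" for w z y
      using that \<open>a \<in> X v\<close> \<open>b \<in> X v\<close>
      by (auto simp: abs_mult intro!: mult_le_one insert.prems(2) upd_in)
    show "g w ((z(w := c))(v := a)) y * g w ((z(w := c))(v := b)) y = g w (z(v := a)) y * g w (z(v := b)) y"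
      if "w \<in> V" "z \<in> ?P" "c \<in> X w" "y \<in> Y" for w z c y
    proof -
      have "w \<noteq> v" using that(1) insert.hyps(2) by blast
      then have "g w ((z(w := c))(v := t)) y = g w (z(v := t)) y" if "t \<in> X v" for t
        using \<open>w \<in> V\<close> \<open>z \<in> ?P\<close> \<open>c \<in> X w\<close> \<open>y \<in> Y\<close> that
        unfolding fun_upd_twist[OF \<open>w \<noteq> v\<close>] by (auto intro!: insert.prems(3) upd_in)
      then show ?thesis using \<open>a \<in> X v\<close> \<open>b \<in> X v\<close> by simp
    qed
  qed
  have "E ^ 2 ^ card (insert v V) = (E\<^sup>2) ^ 2 ^ card V"
    using insert.hyps by (simp add: power_mult[symmetric] mult.commute)
  also have "\<dots> \<le> (avg (X v \<times> X v) (\<lambda>(a, b). T a b)) ^ 2 ^ card V"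
    using E_sq by (intro power_mono) auto
  also have "\<dots> \<le> avg (X v \<times> X v) (\<lambda>(a, b). T a b ^ 2 ^ card V)"
    using avg_power_two_pow_le[of "X v \<times> X v" "\<lambda>(a, b). T a b"] fin by (simp add: split_def)
  also have "\<dots> \<le> avg (X v \<times> X v) (\<lambda>(a, b). real_box_avg V X (F a b))"
    by (rule avg_mono) (auto intro: T_le)
  also have "\<dots> = real_box_avg (insert v V) X f"
    using insert.hyps fin by (simp add: real_box_avg_insert F_def)
  finally show ?case unfolding E_def .
qed

lemma abs_avg_mult_prod_le_box_norm:
  fixes X :: "'u \<Rightarrow> 'a set" and Y :: "'b set" and f :: "('u \<Rightarrow> 'a) \<Rightarrow> real"
    and g :: "'u \<Rightarrow> ('u \<Rightarrow> 'a) \<Rightarrow> 'b \<Rightarrow> real"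
  assumes "finite V" "\<And>w. w \<in> V \<Longrightarrow> finite (X w) \<and> X w \<noteq> {}" "finite Y" "Y \<noteq> {}"
    and "\<And>w x y. w \<in> V \<Longrightarrow> x \<in> PiE V X \<Longrightarrow> y \<in> Y \<Longrightarrow> \<bar>g w x y\<bar> \<le> 1"
    and "\<And>w x a y. w \<in> V \<Longrightarrow> x \<in> PiE V X \<Longrightarrow> a \<in> X w \<Longrightarrow> y \<in> Y \<Longrightarrow> g w (x(w := a)) y = g w x y"
  shows "\<bar>avg (PiE V X \<times> Y) (\<lambda>(x, y). f x * (\<Prod>w\<in>V. g w x y))\<bar> \<le> box_norm V X (\<lambda>x. complex_of_real (f x))"
proof (cases "V = {}")
  case True
  then show ?thesis
    using avg_PiE_empty_Times[OF assms(3,4), of X f] by (simp add: box_norm_of_real real_box_avg_empty)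
next
  case False
  define E where "E = avg (PiE V X \<times> Y) (\<lambda>(x, y). f x * (\<Prod>w\<in>V. g w x y))"
  define N :: nat where "N = 2 ^ card V"
  have "N > 0" "even N" using False assms(1) by (simp_all add: N_def card_gt_0_iff)
  have "E ^ N \<le> real_box_avg V X f"
    using assms unfolding E_def N_def by (rule gowers_cauchy_schwarz)
  then have "\<bar>E\<bar> ^ N \<le> \<bar>real_box_avg V X f\<bar>"
    using \<open>even N\<close> by (simp add: power_even_abs)
  have "\<bar>E\<bar> = root N (\<bar>E\<bar> ^ N)"
    using \<open>N > 0\<close> by (simp add: real_root_power_cancel)
  also have "\<dots> \<le> root N \<bar>real_box_avg V X f\<bar>"
    using \<open>N > 0\<close> \<open>\<bar>E\<bar> ^ N \<le> _\<close> by simp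
  also have "\<dots> = box_norm V X (\<lambda>x. complex_of_real (f x))"
    using \<open>N > 0\<close> by (simp add: N_def box_norm_of_real root_powr_inverse)
  finally show ?thesis unfolding E_def .
qed

lemma bij_betw_merge_PiE:
  assumes "I \<inter> J = {}"
  shows "bij_betw (merge I J) (PiE I X \<times> PiE J X) (PiE (I \<union> J) X)"
proof (rule bij_betw_byWitness[where f' = "\<lambda>x. (restrict x I, restrict x J)"])
  show "\<forall>p \<in> PiE I X \<times> PiE J X. (restrict (merge I J p) I, restrict (merge I J p) J) = p"
    using assms by auto
  show "\<forall>x \<in> PiE (I \<union> J) X. merge I J (restrict x I, restrict x J) = x"
    by simp
  show "merge I J ` (PiE I X \<times> PiE J X) \<subseteq> PiE (I \<union> J) X"
    using assms by (auto simp: PiE_iff)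
  show "(\<lambda>x. (restrict x I, restrict x J)) ` PiE (I \<union> J) X \<subseteq> PiE I X \<times> PiE J X"
    by auto
qed

lemma abs_avg_mult_prod_restrict_le_box_norm:
  fixes X :: "'u \<Rightarrow> 'a set" and f :: "('u \<Rightarrow> 'a) \<Rightarrow> real" and b :: "'u set \<Rightarrow> ('u \<Rightarrow> 'a) \<Rightarrow> real"
  assumes "finite U" "\<And>u. u \<in> U \<Longrightarrow> finite (X u) \<and> X u \<noteq> {}" "W \<subseteq> U" "finite R"
    and "\<And>V. V \<in> R \<Longrightarrow> \<not> W \<subseteq> V" "\<And>V y. V \<in> R \<Longrightarrow> \<bar>b V y\<bar> \<le> 1"
  shows "\<bar>avg (PiE U X) (\<lambda>x. f (restrict x W) * (\<Prod>V\<in>R. b V (restrict x V)))\<bar>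
    \<le> box_norm W X (\<lambda>y. complex_of_real (f y))"
proof -
  obtain c where c: "\<And>V. V \<in> R \<Longrightarrow> c V \<in> W - V"
    using assms(5) by (metis Diff_iff subsetI)
  let ?Y = "PiE (U - W) X"
  define g where "g w x y = (\<Prod>V \<in> {V \<in> R. c V = w}. b V (restrict (merge W (U - W) (x, y)) V))"
    for w x y
  have "bij_betw (merge W (U - W)) (PiE W X \<times> ?Y) (PiE U X)"
    using bij_betw_merge_PiE[of W "U - W" X] assms(3) by (simp add: Un_absorb1)
  then have "avg (PiE U X) (\<lambda>x. f (restrict x W) * (\<Prod>V\<in>R. b V (restrict x V)))
      = avg (PiE W X \<times> ?Y) (\<lambda>(x, y). f x * (\<Prod>w\<in>W. g w x y))"
  proof (subst avg_reindex, assumption, intro avg_cong, clarify)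
    fix x y assume "x \<in> PiE W X"
    have "(\<Prod>w\<in>W. g w x y) = (\<Prod>V\<in>R. b V (restrict (merge W (U - W) (x, y)) V))"
      unfolding g_def using c assms(1,3,4) by (intro prod.group) (auto dest: finite_subset)
    then show "f (restrict (merge W (U - W) (x, y)) W) * (\<Prod>V\<in>R. b V (restrict (merge W (U - W) (x, y)) V))
        = f x * (\<Prod>w\<in>W. g w x y)"
      using \<open>x \<in> PiE W X\<close> by simp
  qed
  also have "\<bar>\<dots>\<bar> \<le> box_norm W X (\<lambda>y. complex_of_real (f y))"
  proof (rule abs_avg_mult_prod_le_box_norm)
    show "finite W" using assms(1,3) by (rule finite_subset[rotated])
    show "finite ?Y" "?Y \<noteq> {}" using assms(1,2) by (auto intro!: finite_PiE simp: PiE_eq_empty_iff)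
    show "\<And>w. w \<in> W \<Longrightarrow> finite (X w) \<and> X w \<noteq> {}" using assms(2,3) by blast
    show "\<bar>g w x y\<bar> \<le> 1" for w x y
      unfolding g_def abs_prod using assms(6) by (intro prod_le_1) auto
    show "g w (x(w := a)) y = g w x y" if "w \<in> W" for w x a y
      unfolding g_def
    proof (intro prod.cong refl arg_cong[where f = "b _"])
      fix V assume "V \<in> {V \<in> R. c V = w}"
      then have "w \<notin> V" using c by blast
      then show "restrict (merge W (U - W) (x(w := a), y)) V = restrict (merge W (U - W) (x, y)) V"
        by (auto simp: restrict_def merge_def)
    qed
  qed
  finally show ?thesis .
qed

lemma sum_le_two_pow_card_mult_Max:
  fixes f :: "'u set \<Rightarrow> real"
  assumes "finite U" "G \<subseteq> Pow U" "G \<noteq> {}" "\<And>V. V \<in> G \<Longrightarrow> 0 \<le> f V"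
  shows "(\<Sum>V\<in>G. f V) \<le> 2 ^ card U * Max (f ` G)"
proof -
  have fin: "finite G" using assms(1,2) by (simp add: finite_subset)
  then have "(\<Sum>V\<in>G. f V) \<le> card G * Max (f ` G)"
    by (intro sum_bounded_above Max_ge) auto
  also have "\<dots> \<le> 2 ^ card U * Max (f ` G)"
  proof (rule mult_right_mono)
    have "card G \<le> 2 ^ card U" using card_mono[OF _ assms(2)] assms(1) by (simp add: card_Pow)
    then show "real (card G) \<le> 2 ^ card U" by (metis of_nat_le_iff of_nat_numeral of_nat_power)
    obtain V where "V \<in> G" using assms(3) by blast
    then have "f V \<le> Max (f ` G)" using fin by (intro Max_ge) auto
    then show "0 \<le> Max (f ` G)" using assms(4)[OF \<open>V \<in> G\<close>] by linarith
  qed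
  finally show ?thesis .
qed

lemma abs_avg_prod_minus_prod_avg_le:
  fixes X :: "'u \<Rightarrow> 'a set" and b :: "'u set \<Rightarrow> ('u \<Rightarrow> 'a) \<Rightarrow> real"
  assumes "finite U" "\<And>u. u \<in> U \<Longrightarrow> finite (X u) \<and> X u \<noteq> {}"
    and "finite G" "G \<subseteq> Pow U" "\<And>V y. V \<in> G \<Longrightarrow> \<bar>b V y\<bar> \<le> 1"
  shows "\<bar>avg (PiE U X) (\<lambda>x. \<Prod>V\<in>G. b V (restrict x V)) - (\<Prod>V\<in>G. avg (PiE V X) (b V))\<bar>
    \<le> (\<Sum>V\<in>G. box_norm V X (\<lambda>y. complex_of_real (b V y - avg (PiE V X) (b V))))"
  using assms(3-5)
proof (induction G rule: finite_remove_induct)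
  case empty
  have "finite (PiE U X)" "PiE U X \<noteq> {}"
    using assms(1,2) by (auto intro!: finite_PiE simp: PiE_eq_empty_iff)
  then show ?case by (simp add: avg_const)
next
  case (remove G)
  obtain W where W: "W \<in> G" "\<And>V. V \<in> G \<Longrightarrow> W \<subseteq> V \<Longrightarrow> W = V"
    using finite_has_maximal[OF remove.hyps(1,2)] by blast
  define R where "R = G - {W}"
  define d where "d V = avg (PiE V X) (b V)" for V
  define bn where "bn V = box_norm V X (\<lambda>y. complex_of_real (b V y - d V))" for V
  define A where "A = avg (PiE U X) (\<lambda>x. (b W (restrict x W) - d W) * (\<Prod>V\<in>R. b V (restrict x V)))"
  define D where "D = avg (PiE U X) (\<lambda>x. \<Prod>V\<in>R. b V (restrict x V)) - (\<Prod>V\<in>R. d V)"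
  have G_eq: "G = insert W R" "W \<notin> R" "finite R" using W(1) remove.hyps(1) by (auto simp: R_def)
  have WU: "W \<subseteq> U" using W(1) remove.prems(1) by blast
  have "avg (PiE U X) (\<lambda>x. \<Prod>V\<in>G. b V (restrict x V))
      = avg (PiE U X) (\<lambda>x. (b W (restrict x W) - d W) * (\<Prod>V\<in>R. b V (restrict x V))
          + d W * (\<Prod>V\<in>R. b V (restrict x V)))"
    using G_eq by (intro avg_cong) (simp add: algebra_simps)
  also have "\<dots> = A + d W * avg (PiE U X) (\<lambda>x. \<Prod>V\<in>R. b V (restrict x V))"
    by (simp add: A_def avg_add avg_cmult)
  finally have split: "avg (PiE U X) (\<lambda>x. \<Prod>V\<in>G. b V (restrict x V)) - (\<Prod>V\<in>G. d V) = A + d W * D"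
    using G_eq(1-3) by (simp add: D_def right_diff_distrib)
  have A_le: "\<bar>A\<bar> \<le> bn W"
    unfolding A_def bn_def
    using assms(1,2) WU G_eq(3) W remove.prems by (intro abs_avg_mult_prod_restrict_le_box_norm) (auto simp: R_def)
  have D_le: "\<bar>D\<bar> \<le> (\<Sum>V\<in>R. bn V)"
    unfolding D_def bn_def d_def R_def using remove.prems by (intro remove.IH W(1)) auto
  have "\<bar>d W\<bar> \<le> 1"
    unfolding d_def using assms(1,2) WU remove.prems(2)[OF W(1)]
    by (intro abs_avg_le_one finite_PiE) (auto dest: finite_subset)
  then have dD_le: "\<bar>d W * D\<bar> \<le> \<bar>D\<bar>" by (simp add: abs_mult mult_left_le_one_le)
  have "\<bar>avg (PiE U X) (\<lambda>x. \<Prod>V\<in>G. b V (restrict x V)) - (\<Prod>V\<in>G. d V)\<bar> \<le> \<bar>A\<bar> + \<bar>D\<bar>"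
    unfolding split using abs_triangle_ineq[of A "d W * D"] dD_le by linarith
  also have "\<dots> \<le> bn W + (\<Sum>V\<in>R. bn V)" using A_le D_le by (rule add_mono)
  also have "\<dots> = (\<Sum>V\<in>G. bn V)" unfolding G_eq(1) using G_eq(3,2) by (rule sum.insert[symmetric])
  finally show ?case by (simp only: d_def bn_def)
qed

theorem lemma4p6:
  fixes U :: "'u set" and X :: "'u \<Rightarrow> 'a set" and S :: "'u set \<Rightarrow> ('u \<Rightarrow> 'a) set"
    and k :: nat
  assumes "finite U"
    and "\<And>u. u \<in> U \<Longrightarrow> finite (X u) \<and> X u \<noteq> {}"
    and "\<And>V. V \<subseteq> U \<Longrightarrow> S V \<subseteq> PiE V X"
    and "k \<le> card U"
  shows "\<bar>avg (PiE U X) (\<lambda>x. \<Prod>V\<in>{V. V \<subseteq> U \<and> card V \<le> k}. indicator (S V) (restrict x V))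
          - (\<Prod>V\<in>{V. V \<subseteq> U \<and> card V \<le> k}. avg (PiE V X) (indicator (S V)))\<bar>
         \<le> 2 ^ card U * Max ((\<lambda>V. box_norm V X
              (\<lambda>y. complex_of_real (indicator (S V) y - avg (PiE V X) (indicator (S V)))))
            ` {V. V \<subseteq> U \<and> card V \<le> k})"
proof -
  let ?G = "{V. V \<subseteq> U \<and> card V \<le> k}"
  define bn where "bn V = box_norm V X
    (\<lambda>y. complex_of_real (indicator (S V) y - avg (PiE V X) (indicator (S V))))" for V
  have G_Pow: "?G \<subseteq> Pow U" by blast
  have fin: "finite ?G" using G_Pow by (rule finite_subset) (simp add: assms(1))
  have "\<bar>indicator (S V) y :: real\<bar> \<le> 1" for V y
    by (rule indicator_abs_le_1)
  then have "\<bar>avg (PiE U X) (\<lambda>x. \<Prod>V\<in>?G. indicator (S V) (restrict x V))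
      - (\<Prod>V\<in>?G. avg (PiE V X) (indicator (S V)))\<bar> \<le> (\<Sum>V\<in>?G. bn V)"
    unfolding bn_def by (intro abs_avg_prod_minus_prod_avg_le[OF assms(1,2) fin G_Pow])
  also have "\<dots> \<le> 2 ^ card U * Max (bn ` ?G)"
    using assms(1) G_Pow by (intro sum_le_two_pow_card_mult_Max) (auto simp: bn_def box_norm_def)
  finally show ?thesis unfolding bn_def .
qed

end
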